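(* Let $a<b$, let $f\in C([a,b])$ be complex valued, let $g\in C^1([a,b])$ be real valued with $|g'|>0$ on $[a,b]$, and let $p:\mathbb{C}\to\mathbb{C}$ be a polynomial. Then \[ \Big|\int_a^be^{ig(x)}f(x)dx-e^{ig(a)}\sum_{k=0}^{\deg p}i^{k+1}p^{(k)}(g(a))+e^{ig(b)}\sum_{k=0}^{\deg p}i^{k+1}p^{(k)}(g(b))\Big|\le\|f-(p\circ g)g'\|_{L^1(a,b)}. \]
   Context: $p^{(k)}$ denotes the $k$-th derivative of $p$. *)

theory Defs
  imports "HOL-Analysis.Analysis" "HOL-Computational_Algebra.Polynomial"
begin

end

theory Submission
  imports Defs
begin

text \<open>Put S(z) = sum of i^(k+1) p^(k)(z) over k \<le> deg p and H(z) = -e^(iz) S(z). Then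
  H' = -e^(iz) (i S + S'), and i S + S' telescopes to -p because p^(deg p + 1) = 0, so H is an
  antiderivative of e^(iz) p(z). By the chain rule the integral of e^(ig) p(g) g' over [a,b] is
  H(g b) - H(g a), hence the left-hand side is the modulus of the integral of e^(ig) (f - p(g) g'),
  which is at most the integral of |f - p(g) g'| since |e^(ig)| = 1.\<close>

lemma higher_pderiv_Suc_degree: "(pderiv ^^ Suc (degree p)) p = 0"
  by (rule poly_eqI) (simp add: coeff_higher_pderiv coeff_eq_0 del: funpow.simps)

definition exp_poly_antideriv :: "complex poly \<Rightarrow> complex \<Rightarrow> complex" where
  "exp_poly_antideriv p z =
     - exp (\<i> * z) * (\<Sum>k=0..degree p. \<i> ^ (k + 1) * poly ((pderiv ^^ k) p) z)"

lemma exp_poly_antideriv_telescope: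
  fixes p :: "complex poly"
  shows "\<i> * (\<Sum>k=0..degree p. \<i> ^ (k + 1) * poly ((pderiv ^^ k) p) z)
       + (\<Sum>k=0..degree p. \<i> ^ (k + 1) * poly ((pderiv ^^ Suc k) p) z) = - poly p z"
proof -
  define u where "u k = \<i> ^ k * poly ((pderiv ^^ k) p) z" for k
  have "\<i> * (\<Sum>k=0..degree p. \<i> ^ (k + 1) * poly ((pderiv ^^ k) p) z)
       + (\<Sum>k=0..degree p. \<i> ^ (k + 1) * poly ((pderiv ^^ Suc k) p) z)
       = (\<Sum>k=0..degree p. u (Suc k) - u k)"
    by (simp add: u_def sum_distrib_left sum.distrib[symmetric] sum_subtractf[symmetric]
        algebra_simps)
  also have "\<dots> = u (Suc (degree p)) - u 0"
    by (rule sum_Suc_diff) simp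
  also have "\<dots> = - poly p z"
    using higher_pderiv_Suc_degree[of p] by (simp add: u_def del: funpow.simps)
  finally show ?thesis .
qed

lemma has_field_derivative_exp_poly_antideriv:
  "(exp_poly_antideriv p has_field_derivative exp (\<i> * z) * poly p z) (at z)"
proof -
  define S where "S = (\<lambda>z. \<Sum>k=0..degree p. \<i> ^ (k + 1) * poly ((pderiv ^^ k) p) z)"
  define S' where "S' = (\<lambda>z. \<Sum>k=0..degree p. \<i> ^ (k + 1) * poly ((pderiv ^^ Suc k) p) z)"
  have "(S has_field_derivative S' z) (at z)"
    unfolding S_def S'_def by (auto intro!: derivative_eq_intros poly_DERIV simp: mult_ac)
  moreover have "exp_poly_antideriv p = (\<lambda>z. - exp (\<i> * z) * S z)"
    by (simp add: fun_eq_iff exp_poly_antideriv_def S_def)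
  ultimately have "(exp_poly_antideriv p has_field_derivative - exp (\<i> * z) * (\<i> * S z + S' z)) (at z)"
    by (auto intro!: derivative_eq_intros simp: algebra_simps)
  then show ?thesis
    unfolding S_def S'_def exp_poly_antideriv_telescope by simp
qed

lemma has_integral_of_antideriv_comp:
  fixes H h :: "complex \<Rightarrow> complex" and g g' :: "real \<Rightarrow> real"
  assumes "a \<le> b"
    and "\<And>z. (H has_field_derivative h z) (at z)"
    and "\<And>x. x \<in> {a..b} \<Longrightarrow> (g has_real_derivative g' x) (at x within {a..b})"
  shows "((\<lambda>x. h (g x) * g' x) has_integral H (g b) - H (g a)) {a..b}"
proof -
  have "((H \<circ> (\<lambda>x. complex_of_real (g x))) has_vector_derivative h (g x) * g' x)
          (at x within {a..b})" if "x \<in> {a..b}" for x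
    using field_vector_diff_chain_within[OF has_vector_derivative_of_real[OF assms(3)[OF that]]
        has_field_derivative_at_within[OF assms(2)]]
    by (simp add: mult.commute)
  from fundamental_theorem_of_calculus[OF assms(1) this] show ?thesis
    by simp
qed

lemma norm_integral_mult_unimodular_le:
  fixes e u :: "real \<Rightarrow> 'a::{real_normed_div_algebra,banach}"
  assumes "continuous_on {a..b} e" "continuous_on {a..b} u"
    and "\<And>x. x \<in> {a..b} \<Longrightarrow> norm (e x) = 1"
  shows "norm (integral {a..b} (\<lambda>x. e x * u x)) \<le> integral {a..b} (\<lambda>x. norm (u x))"
  using assms
  by (intro integral_norm_bound_integral integrable_continuous_interval continuous_intros)
     (simp_all add: norm_mult)

theorem lemma8p7:
  fixes a b :: real
    and f :: "real \<Rightarrow> complex"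
    and g g' :: "real \<Rightarrow> real"
    and p :: "complex poly"
  assumes "a < b"
    and "continuous_on {a..b} f"
    and "\<And>x. x \<in> {a..b} \<Longrightarrow> (g has_real_derivative g' x) (at x within {a..b})"
    and "continuous_on {a..b} g'"
    and "\<And>x. x \<in> {a..b} \<Longrightarrow> \<bar>g' x\<bar> > 0"
  shows "norm (integral {a..b} (\<lambda>x. exp (\<i> * complex_of_real (g x)) * f x)
           - exp (\<i> * complex_of_real (g a)) *
               (\<Sum>k=0..degree p. \<i> ^ (k + 1) * poly ((pderiv ^^ k) p) (complex_of_real (g a)))
           + exp (\<i> * complex_of_real (g b)) *
               (\<Sum>k=0..degree p. \<i> ^ (k + 1) * poly ((pderiv ^^ k) p) (complex_of_real (g b))))
         \<le> integral {a..b} (\<lambda>x. norm (f x - poly p (complex_of_real (g x)) * complex_of_real (g' x)))"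
proof -
  let ?e = "\<lambda>x. exp (\<i> * complex_of_real (g x))"
  let ?q = "\<lambda>x. poly p (complex_of_real (g x)) * complex_of_real (g' x)"
  let ?H = "exp_poly_antideriv p"
  have cont_g: "continuous_on {a..b} g"
    using assms(3) DERIV_continuous continuous_on_eq_continuous_within by blast
  have cont_e: "continuous_on {a..b} ?e" and cont_f_q: "continuous_on {a..b} (\<lambda>x. f x - ?q x)"
    by (auto intro!: continuous_intros cont_g assms(2,4))
  have antideriv: "((\<lambda>x. ?e x * ?q x) has_integral ?H (g b) - ?H (g a)) {a..b}"
    using has_integral_of_antideriv_comp[OF less_imp_le[OF assms(1)]
        has_field_derivative_exp_poly_antideriv assms(3)]
    by (simp add: mult.assoc)
  have integrable: "(\<lambda>x. ?e x * f x) integrable_on {a..b}"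
    by (intro integrable_continuous_interval continuous_intros cont_e assms(2))
  have "integral {a..b} (\<lambda>x. ?e x * f x) - (?H (g b) - ?H (g a))
                   = integral {a..b} (\<lambda>x. ?e x * (f x - ?q x))"
    using integral_diff[OF integrable has_integral_integrable[OF antideriv]]
      integral_unique[OF antideriv]
    by (simp add: right_diff_distrib)
  also have "norm \<dots> \<le> integral {a..b} (\<lambda>x. norm (f x - ?q x))"
    by (rule norm_integral_mult_unimodular_le[OF cont_e cont_f_q]) simp
  finally show ?thesis
    by (simp add: exp_poly_antideriv_def algebra_simps)
qed

end
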